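(* Let $\mathbb X,\mathbb Y$ be Euclidean spaces, $\Phi\colon\mathbb X\rightrightarrows\mathbb Y$ with closed graph, $(\bar x,\bar y)\in\operatorname{gph}\Phi$ and $u\in\mathbb S_{\mathbb X}$. Each of the following three properties remains equivalent to itself when, in its definition, the requirement $x_k^*\in\widehat D^*\Phi(x_k,y_k)(\lambda_k)$ is replaced by $x_k^*\in D^*\Phi(x_k,y_k)(\lambda_k)$: (a) asymptotic regularity of $\Phi$ at $(\bar x,\bar y)$: for all sequences $(x_k,y_k)\in\operatorname{gph}\Phi$, $x_k^*$, $\lambda_k$ and $x^*$ with $x_k\to\bar x$, $y_k\to\bar y$, $x_k^*\to x^*$ and $x_k^*\in\widehat D^*\Phi(x_k,y_k)(\lambda_k)$ for all $k$, one has $x^*\in\operatorname{Im}D^*\Phi(\bar x,\bar y)$; (b) asymptotic regularity of $\Phi$ at $(\bar x,\bar y)$ in direction $u$: for all sequences $(x_k,y_k)\in\operatorname{gph}\Phi$, $x_k^*\in\mathbb X$, $\lambda_k\in\mathbb Y$ and $x^*\in\mathbb X$, $y^*\in\mathbb Y$ with $x_k\notin\Phi^{-1}(\bar y)$, $y_k\ne\bar y$, $x_k^*\in\widehat D^*\Phi(x_k,y_k)(\lambda_k)$ for all $k$ and the convergences (C): $x_k\to\bar x$, $y_k\to\bar y$, $x_k^*\to x^*$, $\frac{x_k-\bar x}{\|x_k-\bar x\|}\to u$, $\frac{y_k-\bar y}{\|x_k-\bar x\|}\to0$, $\frac{\|y_k-\bar y\|}{\|x_k-\bar x\|}\lambda_k\to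 y^*$, $\|\lambda_k\|\to\infty$, $\frac{y_k-\bar y}{\|y_k-\bar y\|}-\frac{\lambda_k}{\|\lambda_k\|}\to0$, one has $x^*\in\operatorname{Im}D^*\Phi(\bar x,\bar y)$; (c) strong asymptotic regularity of $\Phi$ at $(\bar x,\bar y)$ in direction $u$: the same as (b) but with conclusion $x^*\in\operatorname{Im}D^*\Phi((\bar x,\bar y);(u,0))$.
   Context: $\widehat D^*\Phi(x,y)(y^* )=\{x^*\mid(x^*,-y^* )\in\widehat{\mathcal N}_{\operatorname{gph}\Phi}(x,y)\}$ (regular coderivative), $D^*\Phi(x,y)(y^* )$ likewise with the limiting normal cone $\mathcal N$, and $D^*\Phi((\bar x,\bar y);(u,v))(y^* )=\{x^*\mid(x^*,-y^* )\in\mathcal N_{\operatorname{gph}\Phi}((\bar x,\bar y);(u,v))\}$ with the directional limiting normal cone $\mathcal N_Q(z;w)$ = set of $\eta$ with $w_k\to w$, $t_k\downarrow0$, $\eta_k\to\eta$, $\eta_k\in\widehat{\mathcal N}_Q(z+t_kw_k)$. $\operatorname{Im}\Psi:=\bigcup_{y^*}\Psi(y^* )$. *)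

theory Defs
  imports "HOL-Analysis.Analysis"
begin

definition gph :: "('a \<Rightarrow> 'b set) \<Rightarrow> ('a \<times> 'b) set" where
  "gph \<Phi> = {(x, y). y \<in> \<Phi> x}"

text \<open>Regular (Frechet) normal cone: limsup of inner(eta, z'-z)/norm(z'-z) over z' in Q, z' to z, is at most 0;
  empty outside Q.\<close>
definition reg_normal :: "'e::euclidean_space set \<Rightarrow> 'e \<Rightarrow> 'e set" where
  "reg_normal Q z = {\<eta>. z \<in> Q \<and>
     (\<forall>\<epsilon>>0. \<exists>\<delta>>0. \<forall>z'\<in>Q. norm (z' - z) < \<delta> \<longrightarrow> \<eta> \<bullet> (z' - z) \<le> \<epsilon> * norm (z' - z))}"

definition lim_normal :: "'e::euclidean_space set \<Rightarrow> 'e \<Rightarrow> 'e set" where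
  "lim_normal Q z = {\<eta>. \<exists>zs \<eta>s. (\<forall>k. zs k \<in> Q \<and> \<eta>s k \<in> reg_normal Q (zs k)) \<and>
     zs \<longlonglongrightarrow> z \<and> \<eta>s \<longlonglongrightarrow> \<eta>}"

definition dir_normal :: "'e::euclidean_space set \<Rightarrow> 'e \<Rightarrow> 'e \<Rightarrow> 'e set" where
  "dir_normal Q z w = {\<eta>. \<exists>t ws \<eta>s. (\<forall>k. t k > 0 \<and> \<eta>s k \<in> reg_normal Q (z + t k *\<^sub>R ws k)) \<and>
     t \<longlonglongrightarrow> 0 \<and> ws \<longlonglongrightarrow> w \<and> \<eta>s \<longlonglongrightarrow> \<eta>}"

definition reg_coderiv :: "('a::euclidean_space \<Rightarrow> 'b::euclidean_space set) \<Rightarrow> 'a \<Rightarrow> 'b \<Rightarrow> 'b \<Rightarrow> 'a set" where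
  "reg_coderiv \<Phi> x y ys = {xs. (xs, - ys) \<in> reg_normal (gph \<Phi>) (x, y)}"

definition lim_coderiv :: "('a::euclidean_space \<Rightarrow> 'b::euclidean_space set) \<Rightarrow> 'a \<Rightarrow> 'b \<Rightarrow> 'b \<Rightarrow> 'a set" where
  "lim_coderiv \<Phi> x y ys = {xs. (xs, - ys) \<in> lim_normal (gph \<Phi>) (x, y)}"

definition dir_coderiv :: "('a::euclidean_space \<Rightarrow> 'b::euclidean_space set) \<Rightarrow> 'a \<Rightarrow> 'b \<Rightarrow> 'a \<Rightarrow> 'b \<Rightarrow> 'b \<Rightarrow> 'a set" where
  "dir_coderiv \<Phi> x y u v ys = {xs. (xs, - ys) \<in> dir_normal (gph \<Phi>) (x, y) (u, v)}"

definition Im :: "('b \<Rightarrow> 'a set) \<Rightarrow> 'a set" where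
  "Im \<Psi> = (\<Union>ys. \<Psi> ys)"

definition asym_reg ::
  "(('a::euclidean_space \<Rightarrow> 'b::euclidean_space set) \<Rightarrow> 'a \<Rightarrow> 'b \<Rightarrow> 'b \<Rightarrow> 'a set)
    \<Rightarrow> ('a \<Rightarrow> 'b set) \<Rightarrow> 'a \<Rightarrow> 'b \<Rightarrow> bool" where
  "asym_reg D \<Phi> xb yb \<longleftrightarrow>
    (\<forall>(x::nat \<Rightarrow> 'a) (y::nat \<Rightarrow> 'b) (xs::nat \<Rightarrow> 'a) (lam::nat \<Rightarrow> 'b) (xst::'a).
       (\<forall>k. (x k, y k) \<in> gph \<Phi> \<and> xs k \<in> D \<Phi> (x k) (y k) (lam k)) \<and>
       x \<longlonglongrightarrow> xb \<and> y \<longlonglongrightarrow> yb \<and> xs \<longlonglongrightarrow> xst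
       \<longrightarrow> xst \<in> Im (lim_coderiv \<Phi> xb yb))"

definition dir_seq_hyp ::
  "(('a::euclidean_space \<Rightarrow> 'b::euclidean_space set) \<Rightarrow> 'a \<Rightarrow> 'b \<Rightarrow> 'b \<Rightarrow> 'a set)
    \<Rightarrow> ('a \<Rightarrow> 'b set) \<Rightarrow> 'a \<Rightarrow> 'b \<Rightarrow> 'a
    \<Rightarrow> (nat \<Rightarrow> 'a) \<Rightarrow> (nat \<Rightarrow> 'b) \<Rightarrow> (nat \<Rightarrow> 'a) \<Rightarrow> (nat \<Rightarrow> 'b) \<Rightarrow> 'a \<Rightarrow> 'b \<Rightarrow> bool" where
  "dir_seq_hyp D \<Phi> xb yb u x y xs lam xst yst \<longleftrightarrow>
     (\<forall>k. (x k, y k) \<in> gph \<Phi> \<and> yb \<notin> \<Phi> (x k) \<and> y k \<noteq> yb \<and> xs k \<in> D \<Phi> (x k) (y k) (lam k)) \<and>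
     x \<longlonglongrightarrow> xb \<and> y \<longlonglongrightarrow> yb \<and> xs \<longlonglongrightarrow> xst \<and>
     (\<lambda>k. (1 / norm (x k - xb)) *\<^sub>R (x k - xb)) \<longlonglongrightarrow> u \<and>
     (\<lambda>k. (1 / norm (x k - xb)) *\<^sub>R (y k - yb)) \<longlonglongrightarrow> 0 \<and>
     (\<lambda>k. (norm (y k - yb) / norm (x k - xb)) *\<^sub>R lam k) \<longlonglongrightarrow> yst \<and>
     filterlim (\<lambda>k. norm (lam k)) at_top sequentially \<and>
     (\<lambda>k. (1 / norm (y k - yb)) *\<^sub>R (y k - yb) - (1 / norm (lam k)) *\<^sub>R lam k) \<longlonglongrightarrow> 0"

definition asym_reg_dir ::
  "(('a::euclidean_space \<Rightarrow> 'b::euclidean_space set) \<Rightarrow> 'a \<Rightarrow> 'b \<Rightarrow> 'b \<Rightarrow> 'a set)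
    \<Rightarrow> ('a \<Rightarrow> 'b set) \<Rightarrow> 'a \<Rightarrow> 'b \<Rightarrow> 'a \<Rightarrow> bool" where
  "asym_reg_dir D \<Phi> xb yb u \<longleftrightarrow>
    (\<forall>x y xs lam xst yst. dir_seq_hyp D \<Phi> xb yb u x y xs lam xst yst
       \<longrightarrow> xst \<in> Im (lim_coderiv \<Phi> xb yb))"

definition strong_asym_reg_dir ::
  "(('a::euclidean_space \<Rightarrow> 'b::euclidean_space set) \<Rightarrow> 'a \<Rightarrow> 'b \<Rightarrow> 'b \<Rightarrow> 'a set)
    \<Rightarrow> ('a \<Rightarrow> 'b set) \<Rightarrow> 'a \<Rightarrow> 'b \<Rightarrow> 'a \<Rightarrow> bool" where
  "strong_asym_reg_dir D \<Phi> xb yb u \<longleftrightarrow>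
    (\<forall>x y xs lam xst yst. dir_seq_hyp D \<Phi> xb yb u x y xs lam xst yst
       \<longrightarrow> xst \<in> Im (dir_coderiv \<Phi> xb yb u 0))"

end

theory Submission
  imports Defs
begin

text \<open>A limiting normal is a limit of regular normals at nearby points.  Hence a sequence of
  limiting normals (xs k, -lam k) at (x k, y k) can be replaced term by term by regular normals,
  the k-th one chosen within 1/(k+1) of the original and so close that the normalised quantities
  of (C), continuous there as soon as lam k \<noteq> 0, move by less than 1/(k+1).  All convergences
  survive, and so do the side conditions yb \<notin> \<Phi> (x k), y k \<noteq> yb, which are open because the graph
  is closed.  The converse implications hold since regular coderivatives are contained in limiting
  ones.\<close>

lemma tendsto_Pair_iff:
  "((\<lambda>x. (f x, g x)) \<longlongrightarrow> (a, b)) F \<longleftrightarrow> (f \<longlongrightarrow> a) F \<and> (g \<longlongrightarrow> b) F"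
  using tendsto_fst[of "\<lambda>x. (f x, g x)"] tendsto_snd[of "\<lambda>x. (f x, g x)"]
  by (auto intro: tendsto_Pair)

lemma filterlim_norm_at_top_transform:
  fixes f g :: "'a \<Rightarrow> 'b::real_normed_vector"
  assumes "filterlim (\<lambda>x. norm (f x)) at_top F" and "((\<lambda>x. g x - f x) \<longlongrightarrow> 0) F"
  shows "filterlim (\<lambda>x. norm (g x)) at_top F"
proof (rule filterlim_at_top_mono)
  have "((\<lambda>x. - norm (g x - f x)) \<longlongrightarrow> 0) F"
    using tendsto_minus[OF tendsto_norm_zero[OF assms(2)]] by simp
  then show "filterlim (\<lambda>x. - norm (g x - f x) + norm (f x)) at_top F"
    using assms(1) by (rule filterlim_tendsto_add_at_top)
  show "eventually (\<lambda>x. - norm (g x - f x) + norm (f x) \<le> norm (g x)) F"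
  proof (intro always_eventually allI)
    show "- norm (g x - f x) + norm (f x) \<le> norm (g x)" for x
      using norm_triangle_ineq2[of "f x" "g x"] by (simp add: norm_minus_commute)
  qed
qed

lemma reg_normal_subset_lim_normal: "reg_normal Q z \<subseteq> lim_normal Q z"
proof
  fix \<eta> assume \<eta>: "\<eta> \<in> reg_normal Q z"
  then have "z \<in> Q" by (simp add: reg_normal_def)
  with \<eta> show "\<eta> \<in> lim_normal Q z"
    unfolding lim_normal_def by (intro CollectI exI[of _ "\<lambda>_. z"] exI[of _ "\<lambda>_. \<eta>"]) simp
qed

lemma reg_coderiv_subset_lim_coderiv: "reg_coderiv \<Phi> x y l \<subseteq> lim_coderiv \<Phi> x y l"
  unfolding reg_coderiv_def lim_coderiv_def using reg_normal_subset_lim_normal by blast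

lemma lim_normal_approx:
  assumes "snd w \<in> lim_normal Q (fst w)" and "eventually P (nhds w)"
  shows "\<exists>w'. snd w' \<in> reg_normal Q (fst w') \<and> P w'"
proof -
  obtain zs \<eta>s where reg: "\<And>k. \<eta>s k \<in> reg_normal Q (zs k)"
    and "zs \<longlonglongrightarrow> fst w" "\<eta>s \<longlonglongrightarrow> snd w"
    using assms(1) unfolding lim_normal_def by blast
  then have "(\<lambda>k. (zs k, \<eta>s k)) \<longlonglongrightarrow> w"
    using tendsto_Pair by fastforce
  then have "eventually (\<lambda>k. P (zs k, \<eta>s k)) sequentially"
    by (rule eventually_compose_filterlim[OF assms(2)])
  then obtain k where "P (zs k, \<eta>s k)"
    using eventually_happens'[OF sequentially_bot] by blast
  with reg show ?thesis by fastforce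
qed

lemma lim_normal_seq_approx:
  fixes w :: "nat \<Rightarrow> 'e::euclidean_space \<times> 'e" and F :: "'e \<times> 'e \<Rightarrow> 'v::real_normed_vector"
  assumes lim: "\<And>k. snd (w k) \<in> lim_normal Q (fst (w k))"
    and U: "open U" "\<And>k. w k \<in> U"
    and cont: "eventually (\<lambda>k. isCont F (w k)) sequentially"
    and F_lim: "(\<lambda>k. F (w k)) \<longlonglongrightarrow> L"
  obtains w' where "\<And>k. snd (w' k) \<in> reg_normal Q (fst (w' k))" "\<And>k. w' k \<in> U"
    "(\<lambda>k. w' k - w k) \<longlonglongrightarrow> 0" "(\<lambda>k. F (w' k)) \<longlonglongrightarrow> L"
proof -
  define e where "e k = inverse (real (Suc k))" for k
  define P where "P k v \<longleftrightarrow> v \<in> U \<and> dist v (w k) < e k \<and>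
    (isCont F (w k) \<longrightarrow> dist (F v) (F (w k)) < e k)" for k v
  have "eventually (P k) (nhds (w k))" for k
  proof -
    have e_pos: "e k > 0" by (simp add: e_def)
    have "eventually (\<lambda>v. v \<in> U) (nhds (w k))"
      using eventually_nhds_in_open[OF U] .
    moreover have "eventually (\<lambda>v. dist v (w k) < e k) (nhds (w k))"
      using e_pos eventually_nhds_metric by blast
    moreover have "eventually (\<lambda>v. isCont F (w k) \<longrightarrow> dist (F v) (F (w k)) < e k) (nhds (w k))"
      using tendstoD[OF _ e_pos, of F "F (w k)" "nhds (w k)"]
      by (cases "isCont F (w k)") (auto simp: isCont_def tendsto_at_iff_tendsto_nhds)
    ultimately show ?thesis
      unfolding P_def by eventually_elim blast
  qed
  then have "\<forall>k. \<exists>v. snd v \<in> reg_normal Q (fst v) \<and> P k v"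
    using lim_normal_approx lim by blast
  then obtain w' where w': "\<And>k. snd (w' k) \<in> reg_normal Q (fst (w' k)) \<and> P k (w' k)"
    by metis
  have e_lim: "e \<longlonglongrightarrow> 0"
    unfolding e_def by (rule LIMSEQ_inverse_real_of_nat)
  have w'_close: "(\<lambda>k. w' k - w k) \<longlonglongrightarrow> 0"
  proof (rule Lim_transform_bound[OF _ e_lim])
    show "eventually (\<lambda>k. norm (w' k - w k) \<le> norm (e k)) sequentially"
    proof (intro always_eventually allI)
      show "norm (w' k - w k) \<le> norm (e k)" for k
        using w'[of k] by (simp add: P_def dist_norm e_def)
    qed
  qed
  have F_w'_lim: "(\<lambda>k. F (w' k)) \<longlonglongrightarrow> L"
  proof (rule Lim_transform[OF F_lim], rule Lim_transform_bound[OF _ e_lim])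
    show "eventually (\<lambda>k. norm (F (w' k) - F (w k)) \<le> norm (e k)) sequentially"
      using cont
    proof eventually_elim
      case (elim k)
      with w'[of k] have "dist (F (w' k)) (F (w k)) < e k"
        by (simp add: P_def)
      then show ?case
        by (simp add: dist_norm e_def)
    qed
  qed
  show ?thesis
  proof (rule that[OF _ _ w'_close F_w'_lim])
    show "snd (w' k) \<in> reg_normal Q (fst (w' k))" for k
      using w' by blast
    show "w' k \<in> U" for k
      using w'[of k] by (simp add: P_def)
  qed
qed

lemma reg_coderiv_imp_gph: "xs \<in> reg_coderiv \<Phi> x y l \<Longrightarrow> (x, y) \<in> gph \<Phi>"
  unfolding reg_coderiv_def reg_normal_def by simp

lemma lim_coderiv_seq_approx:
  fixes F :: "('a::euclidean_space \<times> 'b::euclidean_space) \<times> ('a \<times> 'b) \<Rightarrow> 'v::real_normed_vector"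
  assumes lim: "\<And>k. xs k \<in> lim_coderiv \<Phi> (x k) (y k) (lam k)"
    and U: "open U" "\<And>k. ((x k, y k), (xs k, - lam k)) \<in> U"
    and cont: "eventually (\<lambda>k. isCont F ((x k, y k), (xs k, - lam k))) sequentially"
    and F_lim: "(\<lambda>k. F ((x k, y k), (xs k, - lam k))) \<longlonglongrightarrow> L"
  obtains x' y' xs' lam' where "\<And>k. xs' k \<in> reg_coderiv \<Phi> (x' k) (y' k) (lam' k)"
    "\<And>k. ((x' k, y' k), (xs' k, - lam' k)) \<in> U"
    "(\<lambda>k. x' k - x k) \<longlonglongrightarrow> 0" "(\<lambda>k. y' k - y k) \<longlonglongrightarrow> 0"
    "(\<lambda>k. xs' k - xs k) \<longlonglongrightarrow> 0" "(\<lambda>k. lam' k - lam k) \<longlonglongrightarrow> 0"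
    "(\<lambda>k. F ((x' k, y' k), (xs' k, - lam' k))) \<longlonglongrightarrow> L"
proof -
  define w where "w k = ((x k, y k), (xs k, - lam k))" for k
  obtain w' where reg: "\<And>k. snd (w' k) \<in> reg_normal (gph \<Phi>) (fst (w' k))"
    and in_U: "\<And>k. w' k \<in> U" and close: "(\<lambda>k. w' k - w k) \<longlonglongrightarrow> 0"
    and F_w'_lim: "(\<lambda>k. F (w' k)) \<longlonglongrightarrow> L"
    using lim_normal_seq_approx[of w "gph \<Phi>" U F L] lim U cont F_lim
    unfolding w_def lim_coderiv_def by auto
  define x' where "x' k = fst (fst (w' k))" for k
  define y' where "y' k = snd (fst (w' k))" for k
  define xs' where "xs' k = fst (snd (w' k))" for k
  define lam' where "lam' k = - snd (snd (w' k))" for k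
  have w': "w' k = ((x' k, y' k), (xs' k, - lam' k))" for k
    by (simp add: x'_def y'_def xs'_def lam'_def)
  have "(\<lambda>k. ((x' k - x k, y' k - y k), (xs' k - xs k, - (lam' k - lam k)))) \<longlonglongrightarrow> ((0, 0), (0, 0))"
    using close by (simp add: w' w_def zero_prod_def)
  then show ?thesis
  proof (intro that)
    show "xs' k \<in> reg_coderiv \<Phi> (x' k) (y' k) (lam' k)" for k
      using reg[of k] by (simp add: w' reg_coderiv_def)
    show "((x' k, y' k), (xs' k, - lam' k)) \<in> U" for k
      using in_U[of k] by (simp add: w')
    show "(\<lambda>k. F ((x' k, y' k), (xs' k, - lam' k))) \<longlonglongrightarrow> L"
      using F_w'_lim by (simp add: w')
  qed (auto simp: tendsto_Pair_iff dest: tendsto_minus)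
qed

lemma asym_reg_seq_lim_imp_reg:
  assumes "\<forall>k. (x k, y k) \<in> gph \<Phi> \<and> xs k \<in> lim_coderiv \<Phi> (x k) (y k) (lam k)"
    and "x \<longlonglongrightarrow> xb" "y \<longlonglongrightarrow> yb" "xs \<longlonglongrightarrow> xst"
  obtains x' y' xs' lam'
  where "\<forall>k. (x' k, y' k) \<in> gph \<Phi> \<and> xs' k \<in> reg_coderiv \<Phi> (x' k) (y' k) (lam' k)"
    and "x' \<longlonglongrightarrow> xb" "y' \<longlonglongrightarrow> yb" "xs' \<longlonglongrightarrow> xst"
proof -
  obtain x' y' xs' lam' where reg: "\<And>k. xs' k \<in> reg_coderiv \<Phi> (x' k) (y' k) (lam' k)"
    and x': "(\<lambda>k. x' k - x k) \<longlonglongrightarrow> 0" and y': "(\<lambda>k. y' k - y k) \<longlonglongrightarrow> 0"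
    and xs': "(\<lambda>k. xs' k - xs k) \<longlonglongrightarrow> 0"
    \<comment> \<open>no open side condition and no further quantity to preserve\<close>
    by (rule lim_coderiv_seq_approx[of xs \<Phi> x y lam UNIV "\<lambda>_. 0 :: real" 0]) (use assms(1) in auto)
  show ?thesis
  proof (rule that)
    show "\<forall>k. (x' k, y' k) \<in> gph \<Phi> \<and> xs' k \<in> reg_coderiv \<Phi> (x' k) (y' k) (lam' k)"
      using reg reg_coderiv_imp_gph by blast
  qed (fact Lim_transform[OF assms(2) x'] Lim_transform[OF assms(3) y'] Lim_transform[OF assms(4) xs'])+
qed

lemma dir_seq_hyp_lim_imp_reg:
  fixes \<Phi> :: "'a::euclidean_space \<Rightarrow> 'b::euclidean_space set"
  assumes closed: "closed (gph \<Phi>)" and base: "(xb, yb) \<in> gph \<Phi>"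
    and hyp: "dir_seq_hyp lim_coderiv \<Phi> xb yb u x y xs lam xst yst"
  obtains x' y' xs' lam' where "dir_seq_hyp reg_coderiv \<Phi> xb yb u x' y' xs' lam' xst yst"
proof -
  note H = hyp[unfolded dir_seq_hyp_def]
  define U :: "(('a \<times> 'b) \<times> ('a \<times> 'b)) set"
    where "U = - ((\<lambda>v. (fst (fst v), yb)) -` gph \<Phi>) \<inter> {v. snd (fst v) \<noteq> yb}"
  have "open U"
    unfolding U_def using closed
    by (intro open_Int open_Compl continuous_closed_vimage open_Collect_neq)
      (auto intro!: continuous_intros)
  have U_w: "((x k, y k), (xs k, - lam k)) \<in> U" for k
    using H by (simp add: U_def gph_def)
  define F where "F = (\<lambda>((x, y), (xs :: 'a), l).
    ((1 / norm (x - xb)) *\<^sub>R (x - xb), (1 / norm (x - xb)) *\<^sub>R (y - yb),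
     (norm (y - yb) / norm (x - xb)) *\<^sub>R (- l), (1 / norm (y - yb)) *\<^sub>R (y - yb) - (1 / norm l) *\<^sub>R (- l)))"
  have cont: "eventually (\<lambda>k. isCont F ((x k, y k), (xs k, - lam k))) sequentially"
  proof -
    have "eventually (\<lambda>k. 1 \<le> norm (lam k)) sequentially"
      using H by (simp add: filterlim_at_top)
    then show ?thesis
    proof eventually_elim
      case (elim k)
      have "x k \<noteq> xb" "y k \<noteq> yb"
        using H base by (auto simp: gph_def)
      moreover have "lam k \<noteq> 0"
        using elim by auto
      ultimately show ?case
        unfolding F_def case_prod_unfold by (auto intro!: continuous_intros)
    qed
  qed
  have F_lim: "(\<lambda>k. F ((x k, y k), (xs k, - lam k))) \<longlonglongrightarrow> (u, 0, yst, 0)"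
    using H by (simp add: F_def tendsto_Pair_iff)
  obtain x' y' xs' lam' where reg: "\<And>k. xs' k \<in> reg_coderiv \<Phi> (x' k) (y' k) (lam' k)"
    and U_w': "\<And>k. ((x' k, y' k), (xs' k, - lam' k)) \<in> U"
    and x': "(\<lambda>k. x' k - x k) \<longlonglongrightarrow> 0" and y': "(\<lambda>k. y' k - y k) \<longlonglongrightarrow> 0"
    and xs': "(\<lambda>k. xs' k - xs k) \<longlonglongrightarrow> 0" and lam': "(\<lambda>k. lam' k - lam k) \<longlonglongrightarrow> 0"
    and F_lim': "(\<lambda>k. F ((x' k, y' k), (xs' k, - lam' k))) \<longlonglongrightarrow> (u, 0, yst, 0)"
    by (rule lim_coderiv_seq_approx[OF _ \<open>open U\<close> U_w cont F_lim]) (use H in blast)+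
  have "dir_seq_hyp reg_coderiv \<Phi> xb yb u x' y' xs' lam' xst yst"
    unfolding dir_seq_hyp_def
  proof (intro conjI allI)
    show "(x' k, y' k) \<in> gph \<Phi>" "xs' k \<in> reg_coderiv \<Phi> (x' k) (y' k) (lam' k)" for k
      using reg reg_coderiv_imp_gph by blast+
    show "yb \<notin> \<Phi> (x' k)" "y' k \<noteq> yb" for k
      using U_w'[of k] by (simp_all add: U_def gph_def)
    show "x' \<longlonglongrightarrow> xb" "y' \<longlonglongrightarrow> yb" "xs' \<longlonglongrightarrow> xst"
      using Lim_transform[OF _ x'] Lim_transform[OF _ y'] Lim_transform[OF _ xs'] H by blast+
    show "filterlim (\<lambda>k. norm (lam' k)) at_top sequentially"
      using filterlim_norm_at_top_transform[OF _ lam'] H by blast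
  qed (use F_lim' in \<open>simp_all add: F_def tendsto_Pair_iff\<close>)
  then show ?thesis
    by (rule that)
qed

lemma asym_reg_reg_coderiv_iff: "asym_reg reg_coderiv \<Phi> xb yb \<longleftrightarrow> asym_reg lim_coderiv \<Phi> xb yb"
proof
  assume reg: "asym_reg reg_coderiv \<Phi> xb yb"
  show "asym_reg lim_coderiv \<Phi> xb yb"
    unfolding asym_reg_def
  proof (intro allI impI, elim conjE)
    fix x y xs lam xst
    assume "\<forall>k. (x k, y k) \<in> gph \<Phi> \<and> xs k \<in> lim_coderiv \<Phi> (x k) (y k) (lam k)"
      and "x \<longlonglongrightarrow> xb" "y \<longlonglongrightarrow> yb" "xs \<longlonglongrightarrow> xst"
    then obtain x' y' xs' lam'
      where "\<forall>k. (x' k, y' k) \<in> gph \<Phi> \<and> xs' k \<in> reg_coderiv \<Phi> (x' k) (y' k) (lam' k)"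
        and "x' \<longlonglongrightarrow> xb" "y' \<longlonglongrightarrow> yb" "xs' \<longlonglongrightarrow> xst"
      by (rule asym_reg_seq_lim_imp_reg)
    with reg show "xst \<in> Im (lim_coderiv \<Phi> xb yb)"
      unfolding asym_reg_def by blast
  qed
next
  assume "asym_reg lim_coderiv \<Phi> xb yb"
  then show "asym_reg reg_coderiv \<Phi> xb yb"
    unfolding asym_reg_def using reg_coderiv_subset_lim_coderiv by blast
qed

lemma dir_seq_hyp_reg_imp_lim:
  "dir_seq_hyp reg_coderiv \<Phi> xb yb u x y xs lam xst yst \<Longrightarrow> dir_seq_hyp lim_coderiv \<Phi> xb yb u x y xs lam xst yst"
  unfolding dir_seq_hyp_def using reg_coderiv_subset_lim_coderiv by blast

lemma all_dir_seq_hyp_reg_coderiv_iff: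
  fixes \<Phi> :: "'a::euclidean_space \<Rightarrow> 'b::euclidean_space set"
  assumes "closed (gph \<Phi>)" and "(xb, yb) \<in> gph \<Phi>"
  shows "(\<forall>x y xs lam xst yst. dir_seq_hyp reg_coderiv \<Phi> xb yb u x y xs lam xst yst \<longrightarrow> P xst) \<longleftrightarrow>
    (\<forall>x y xs lam xst yst. dir_seq_hyp lim_coderiv \<Phi> xb yb u x y xs lam xst yst \<longrightarrow> P xst)"
proof
  assume reg: "\<forall>x y xs lam xst yst. dir_seq_hyp reg_coderiv \<Phi> xb yb u x y xs lam xst yst \<longrightarrow> P xst"
  show "\<forall>x y xs lam xst yst. dir_seq_hyp lim_coderiv \<Phi> xb yb u x y xs lam xst yst \<longrightarrow> P xst"
  proof (intro allI impI)
    fix x y xs lam xst yst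
    assume "dir_seq_hyp lim_coderiv \<Phi> xb yb u x y xs lam xst yst"
    then obtain x' y' xs' lam' where "dir_seq_hyp reg_coderiv \<Phi> xb yb u x' y' xs' lam' xst yst"
      by (rule dir_seq_hyp_lim_imp_reg[OF assms])
    with reg show "P xst" by blast
  qed
qed (use dir_seq_hyp_reg_imp_lim in blast)

theorem proposition5p2:
  fixes \<Phi> :: "'a::euclidean_space \<Rightarrow> 'b::euclidean_space set"
    and xb :: 'a and yb :: 'b and u :: 'a
  assumes "closed (gph \<Phi>)"
    and "(xb, yb) \<in> gph \<Phi>"
    and "norm u = 1"
  shows "(asym_reg reg_coderiv \<Phi> xb yb \<longleftrightarrow> asym_reg lim_coderiv \<Phi> xb yb)
       \<and> (asym_reg_dir reg_coderiv \<Phi> xb yb u \<longleftrightarrow> asym_reg_dir lim_coderiv \<Phi> xb yb u)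
       \<and> (strong_asym_reg_dir reg_coderiv \<Phi> xb yb u \<longleftrightarrow> strong_asym_reg_dir lim_coderiv \<Phi> xb yb u)"
proof -
  have "asym_reg_dir reg_coderiv \<Phi> xb yb u \<longleftrightarrow> asym_reg_dir lim_coderiv \<Phi> xb yb u"
    unfolding asym_reg_dir_def by (rule all_dir_seq_hyp_reg_coderiv_iff[OF assms(1,2)])
  moreover have "strong_asym_reg_dir reg_coderiv \<Phi> xb yb u \<longleftrightarrow> strong_asym_reg_dir lim_coderiv \<Phi> xb yb u"
    unfolding strong_asym_reg_dir_def by (rule all_dir_seq_hyp_reg_coderiv_iff[OF assms(1,2)])
  ultimately show ?thesis
    using asym_reg_reg_coderiv_iff by blast
qed

end
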